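(* Let $n\ge 2$, let $v_1,\dots,v_N\in S^{n-1}$ be unit vectors not contained in any closed hemisphere and in general position in dimension $n$, and let $(P_i)$ be a sequence of polytopes in $\mathcal P(v_1,\dots,v_N)$. If the outer radii $R_i$ of $P_i$ are not uniformly bounded and $q\ge 0$, then the chord integrals $I_q(P_i)$ are not bounded.
   Context: Unit vectors are in general position in dimension $n$ if any $n$ of them are linearly independent. $\mathcal P(v_1,\dots,v_N)$ is the set of polytopes in $\mathbb R^n$ with nonempty interior whose facet outer unit normals all belong to $\{v_1,\dots,v_N\}$. The outer radius of a convex body is the smallest radius of a ball containing it. For $q\ge 0$ and a convex body $K$, the chord integral is $I_q(K)=\int_{\mathscr L^n}|K\cap\ell|^q\,d\ell$, where $\mathscr L^n$ is the affine Grassmannian of lines in $\mathbb R^n$ with its Haar measure and $|K\cap\ell|$ is the length of the chord $K\cap\ell$. *)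

theory Defs
  imports "HOL-Analysis.Analysis"
begin

definition not_in_closed_hemisphere :: "nat \<Rightarrow> (nat \<Rightarrow> 'a::euclidean_space) \<Rightarrow> bool" where
  "not_in_closed_hemisphere N v \<longleftrightarrow>
     \<not> (\<exists>u. norm u = 1 \<and> (\<forall>i\<in>{1..N}. v i \<bullet> u \<ge> 0))"

definition general_position :: "nat \<Rightarrow> (nat \<Rightarrow> 'a::euclidean_space) \<Rightarrow> bool" where
  "general_position N v \<longleftrightarrow>
     (\<forall>I. I \<subseteq> {1..N} \<and> card I = DIM('a) \<longrightarrow> inj_on v I \<and> independent (v ` I))"

definition polytope_class :: "nat \<Rightarrow> (nat \<Rightarrow> 'a::euclidean_space) \<Rightarrow> 'a set set" where
  "polytope_class N v = {P. polytope P \<and> interior P \<noteq> {} \<and>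
     (\<forall>F. F facet_of P \<longrightarrow>
        (\<exists>i\<in>{1..N}. \<exists>b. P \<subseteq> {x. v i \<bullet> x \<le> b} \<and> F = P \<inter> {x. v i \<bullet> x = b}))}"

definition outer_radius :: "'a::euclidean_space set \<Rightarrow> real" where
  "outer_radius K = Inf {r. \<exists>c. K \<subseteq> cball c r}"

definition chord_length :: "'a::euclidean_space set \<Rightarrow> 'a \<Rightarrow> 'a \<Rightarrow> real" where
  "chord_length K x u = measure lborel {t::real. x + t *\<^sub>R u \<in> K}"

text \<open>The Haar measure on lines is realised (up to a positive constant
  factor) as: direction u in S^{n-1} with the (cone) surface measure,
  u = w/|w| for w uniform in the unit ball, and base point y in u-perp with
  (n-1)-dimensional Lebesgue measure, realised as the Lebesgue measure of the slab
  {x. 0 \<le> x\<bullet>u \<le> 1} (the line x + R u only depends on the projection of x to u-perp).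
  The convention 0 powr q = 0 means lines missing K contribute 0 (also for q = 0).\<close>
definition chord_integral :: "real \<Rightarrow> 'a::euclidean_space set \<Rightarrow> ennreal" where
  "chord_integral q K =
     (\<integral>\<^sup>+ w. indicator (ball 0 1) w *
        (\<integral>\<^sup>+ x. indicator {x. 0 \<le> x \<bullet> sgn w \<and> x \<bullet> sgn w \<le> 1} x *
                ennreal (chord_length K x (sgn w) powr q) \<partial>lborel) \<partial>lborel)"

end

theory Submission
  imports Defs
begin

text \<open>Because the normals are in general position and not in a closed hemisphere,
  every subset S of them with 0 in its convex hull positively spans, with a constant
  \<mu> > 0 independent of S: for every d some a \<in> S has a \<bullet> d \<ge> \<mu> * norm d.
  At the centre x of a largest inscribed ball (radius r) of a polytope P of the class,
  the normals of the facets touching that ball contain 0 in their convex hull, which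
  forces P \<subseteq> cball x (r / \<mu>); so the inradius is at least \<mu> times the outer
  radius. If P contains a ball of radius m + 1, then for each direction u the lines
  parallel to u through m disjoint balls of radius 1/2 in a slab all meet P in chords
  of length \<ge> 1, so I_q(P) grows at least linearly in the inradius, hence in the
  outer radius.\<close>

lemma DIM_le_card_if_not_in_closed_hemisphere:
  fixes v :: "nat \<Rightarrow> 'a::euclidean_space"
  assumes "not_in_closed_hemisphere N v"
  shows "DIM('a) \<le> card (v ` {1..N})"
proof (rule ccontr)
  let ?V = "v ` {1..N}"
  assume "\<not> ?thesis"
  then have "dim (span ?V) < DIM('a)"
    using dim_le_card'[of ?V] by (simp add: dim_span)
  then have "span ?V \<noteq> UNIV" by (metis dim_UNIV less_irrefl)
  then obtain a :: 'a where "a \<noteq> 0" and a: "\<forall>x\<in>span ?V. a \<bullet> x = 0"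
    using span_not_UNIV_orthogonal by blast
  then have "norm (sgn a) = 1" by (simp add: norm_sgn)
  moreover have "v i \<bullet> sgn a = 0" if "i \<in> {1..N}" for i
  proof -
    have "a \<bullet> v i = 0" using a span_base[of "v i" ?V] that by blast
    then show ?thesis by (simp add: sgn_div_norm inner_commute)
  qed
  ultimately show False using assms unfolding not_in_closed_hemisphere_def by force
qed

text \<open>Not lying in a hemisphere supplies at least n distinct vectors, so every
  small subset extends to n of them, which are independent.\<close>
lemma general_position_independent:
  fixes v :: "nat \<Rightarrow> 'a::euclidean_space"
  assumes hem: "not_in_closed_hemisphere N v" and gp: "general_position N v"
    and T: "T \<subseteq> v ` {1..N}" "card T \<le> DIM('a)"
  shows "independent T"
proof -
  let ?V = "v ` {1..N}"
  have "finite T" using T(1) finite_subset by blast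
  have "card (?V - T) = card ?V - card T" using T(1) \<open>finite T\<close> by (simp add: card_Diff_subset)
  then have "DIM('a) - card T \<le> card (?V - T)"
    using DIM_le_card_if_not_in_closed_hemisphere[OF hem] by linarith
  then obtain R where R: "R \<subseteq> ?V - T" "card R = DIM('a) - card T" "finite R"
    by (meson obtain_subset_with_card_n)
  have card_TR: "card (T \<union> R) = DIM('a)"
    using R \<open>finite T\<close> T by (subst card_Un_disjoint) auto
  have TR: "T \<union> R \<subseteq> ?V" using R T by auto
  define J where "J = inv_into {1..N} v ` (T \<union> R)"
  have "J \<subseteq> {1..N}" unfolding J_def using TR by (auto intro: inv_into_into)
  moreover have "inj_on (inv_into {1..N} v) (T \<union> R)" using TR by (metis inj_on_inv_into)
  then have "card J = DIM('a)" unfolding J_def using card_TR by (simp add: card_image)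
  ultimately have "independent (v ` J)" using gp unfolding general_position_def by blast
  moreover have "v ` J = T \<union> R" unfolding J_def by (rule image_inv_into_cancel[OF refl TR])
  ultimately show ?thesis using independent_mono by blast
qed

text \<open>Take the support of a convex combination of S equal to 0.\<close>
lemma zero_in_convex_hull_dependent_orthogonal:
  fixes S :: "'a::euclidean_space set"
  assumes "finite S" and "0 \<in> convex hull S" and le: "\<forall>a\<in>S. a \<bullet> d \<le> 0"
  shows "\<exists>T\<subseteq>S. dependent T \<and> T \<subseteq> {x. d \<bullet> x = 0}"
proof -
  obtain u where u: "\<forall>x\<in>S. 0 \<le> u x" "sum u S = 1" "(\<Sum>x\<in>S. u x *\<^sub>R x) = 0"
    using assms(2)[unfolded convex_hull_finite[OF \<open>finite S\<close>]] by blast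
  have "(\<Sum>x\<in>S. - (u x * (x \<bullet> d))) = - ((\<Sum>x\<in>S. u x *\<^sub>R x) \<bullet> d)"
    by (simp add: inner_sum_left sum_negf)
  also have "\<dots> = 0" using u by simp
  finally have "(\<Sum>x\<in>S. - (u x * (x \<bullet> d))) = 0" .
  moreover have "\<forall>x\<in>S. 0 \<le> - (u x * (x \<bullet> d))" using u le by (simp add: mult_nonneg_nonpos)
  ultimately have "\<forall>x\<in>S. - (u x * (x \<bullet> d)) = 0"
    using sum_nonneg_eq_0_iff[OF \<open>finite S\<close>, of "\<lambda>x. - (u x * (x \<bullet> d))"] by simp
  then have orth: "\<forall>x\<in>S. u x * (x \<bullet> d) = 0" by simp
  define T where "T = {x\<in>S. u x \<noteq> 0}"
  have "finite T" "T \<subseteq> S" using \<open>finite S\<close> by (auto simp: T_def)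
  have "(\<Sum>x\<in>T. u x *\<^sub>R x) = (\<Sum>x\<in>S. u x *\<^sub>R x)"
    by (rule sum.mono_neutral_left[OF \<open>finite S\<close> \<open>T \<subseteq> S\<close>]) (auto simp: T_def)
  then have sum_T: "(\<Sum>x\<in>T. u x *\<^sub>R x) = 0" using u by simp
  have "T \<noteq> {}"
  proof
    assume "T = {}"
    then have "sum u S = 0" by (simp add: T_def)
    then show False using u(2) by simp
  qed
  then obtain t where "t \<in> T" "u t \<noteq> 0" by (auto simp: T_def)
  then have "dependent T"
    using sum_T unfolding real_vector.dependent_finite[OF \<open>finite T\<close>] by blast
  moreover have "T \<subseteq> {x. d \<bullet> x = 0}" using orth by (auto simp: T_def inner_commute)
  ultimately show ?thesis using \<open>T \<subseteq> S\<close> by blast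
qed

text \<open>A dependent set in the hyperplane orthogonal to d cannot consist of vectors
  in general position: at most n - 1 of them are independent there.\<close>
lemma exists_inner_pos_if_zero_in_convex_hull:
  fixes v :: "nat \<Rightarrow> 'a::euclidean_space"
  assumes hem: "not_in_closed_hemisphere N v" and gp: "general_position N v"
    and S: "S \<subseteq> v ` {1..N}" and "0 \<in> convex hull S" and "d \<noteq> 0"
  shows "\<exists>a\<in>S. a \<bullet> d > 0"
proof (rule ccontr)
  assume "\<not> ?thesis"
  then have "\<forall>a\<in>S. a \<bullet> d \<le> 0" by auto
  moreover have "finite S" using S finite_subset by blast
  ultimately obtain T where "T \<subseteq> S" "dependent T" and T_hyperplane: "T \<subseteq> {x. d \<bullet> x = 0}"
    using zero_in_convex_hull_dependent_orthogonal[OF _ \<open>0 \<in> convex hull S\<close>] by blast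
  have "finite T" using \<open>finite S\<close> \<open>T \<subseteq> S\<close> finite_subset by blast
  obtain T' where T': "T' \<subseteq> T" "card T' = min (card T) DIM('a)"
    by (metis min.cobounded1 obtain_subset_with_card_n)
  then have "independent T'"
    using general_position_independent[OF hem gp, of T'] \<open>T \<subseteq> S\<close> S by auto
  then have "card T' \<le> dim {x. d \<bullet> x = 0}"
    using independent_card_le_dim T' T_hyperplane by blast
  also have "\<dots> = DIM('a) - 1" using \<open>d \<noteq> 0\<close> by (simp add: dim_hyperplane)
  finally have "card T' = card T" using T'(2) DIM_positive[where 'a='a] by linarith
  then have "T' = T" using T'(1) \<open>finite T\<close> card_subset_eq by blast
  then show False using \<open>dependent T\<close> \<open>independent T'\<close> by simp
qed

lemma uniform_inner_lower_bound:
  fixes S :: "'a::euclidean_space set"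
  assumes "finite S" and pos: "\<forall>d. d \<noteq> 0 \<longrightarrow> (\<exists>a\<in>S. a \<bullet> d > 0)"
  shows "\<exists>\<mu>>0. \<forall>d. \<exists>a\<in>S. \<mu> * norm d \<le> a \<bullet> d"
proof -
  obtain b :: 'a where "b \<in> Basis" using nonempty_Basis by blast
  then have "S \<noteq> {}" using pos nonzero_Basis by blast
  define f where "f d = (\<Sum>a\<in>S. max 0 (a \<bullet> d))" for d
  have "continuous_on (sphere 0 1) f" unfolding f_def by (intro continuous_intros)
  moreover have "sphere (0::'a) 1 \<noteq> {}" by simp
  ultimately obtain d0 where d0: "d0 \<in> sphere 0 1" "\<forall>d\<in>sphere 0 1. f d0 \<le> f d"
    using continuous_attains_inf[OF compact_sphere] by blast
  then have "d0 \<noteq> 0" by auto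
  then obtain a0 where a0: "a0 \<in> S" "a0 \<bullet> d0 > 0" using pos by blast
  have "f d0 > 0" unfolding f_def
    by (rule sum_pos2[OF \<open>finite S\<close> a0(1)]) (use a0 in auto)
  define \<mu> where "\<mu> = f d0 / card S"
  have "card S > 0" using \<open>finite S\<close> \<open>S \<noteq> {}\<close> by (simp add: card_gt_0_iff)
  have "\<mu> > 0" unfolding \<mu>_def using \<open>f d0 > 0\<close> \<open>card S > 0\<close> by simp
  have homogeneous: "f (c *\<^sub>R d) = c * f d" if "c \<ge> 0" for c d
    unfolding f_def sum_distrib_left
    by (rule sum.cong[OF refl]) (use that in \<open>simp add: max_mult_distrib_left\<close>)
  have "\<exists>a\<in>S. \<mu> * norm d \<le> a \<bullet> d" for d
  proof (cases "d = 0")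
    case True
    then show ?thesis using \<open>S \<noteq> {}\<close> by auto
  next
    case False
    have "f d0 \<le> f ((1 / norm d) *\<^sub>R d)" using d0 False by simp
    also have "\<dots> = f d / norm d" using homogeneous[of "1 / norm d" d] by simp
    finally have "f d0 * norm d \<le> f d" using False by (simp add: field_simps)
    show ?thesis
    proof (rule ccontr)
      assume "\<not> ?thesis"
      then have "max 0 (a \<bullet> d) < \<mu> * norm d" if "a \<in> S" for a
        using that \<open>\<mu> > 0\<close> False by auto
      then have "f d < (\<Sum>a\<in>S. \<mu> * norm d)"
        unfolding f_def by (intro sum_strict_mono[OF \<open>finite S\<close> \<open>S \<noteq> {}\<close>])
      also have "\<dots> = f d0 * norm d" unfolding \<mu>_def using \<open>card S > 0\<close> by simp
      finally show False using \<open>f d0 * norm d \<le> f d\<close> by simp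
    qed
  qed
  then show ?thesis using \<open>\<mu> > 0\<close> by blast
qed

lemma finite_Ball_uniform_pos:
  assumes "finite X" and "\<forall>x\<in>X. \<exists>\<mu>>0. Q x (\<mu>::real)"
    and downward_closed: "\<And>x \<mu> \<mu>'. Q x \<mu> \<Longrightarrow> 0 < \<mu>' \<Longrightarrow> \<mu>' \<le> \<mu> \<Longrightarrow> Q x \<mu>'"
  shows "\<exists>\<mu>>0. \<forall>x\<in>X. Q x \<mu>"
  using assms(1,2)
proof (induction X rule: finite_induct)
  case empty
  show ?case by (intro exI[of _ 1]) auto
next
  case (insert x F)
  then obtain \<mu>1 \<mu>2 where "\<mu>1 > 0" "\<forall>y\<in>F. Q y \<mu>1" "\<mu>2 > 0" "Q x \<mu>2" by auto
  then show ?case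
    by (intro exI[of _ "min \<mu>1 \<mu>2"]) (auto intro: downward_closed)
qed

lemma general_position_uniform_inner_bound:
  fixes v :: "nat \<Rightarrow> 'a::euclidean_space"
  assumes hem: "not_in_closed_hemisphere N v" and gp: "general_position N v"
  shows "\<exists>\<mu>>0. \<forall>S. S \<subseteq> v ` {1..N} \<and> 0 \<in> convex hull S \<longrightarrow>
           (\<forall>d. \<exists>a\<in>S. \<mu> * norm d \<le> a \<bullet> d)"
proof -
  let ?X = "{S. S \<subseteq> v ` {1..N} \<and> 0 \<in> convex hull S}"
  have "finite ?X" by (rule finite_subset[of _ "Pow (v ` {1..N})"]) auto
  then have "\<exists>\<mu>>0. \<forall>S\<in>?X. \<forall>d. \<exists>a\<in>S. \<mu> * norm d \<le> a \<bullet> d"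
  proof (rule finite_Ball_uniform_pos)
    show "\<forall>S\<in>?X. \<exists>\<mu>>0. \<forall>d. \<exists>a\<in>S. \<mu> * norm d \<le> a \<bullet> d"
    proof
      fix S assume S: "S \<in> ?X"
      then have "finite S" using finite_subset by blast
      then show "\<exists>\<mu>>0. \<forall>d. \<exists>a\<in>S. \<mu> * norm d \<le> a \<bullet> d"
        by (rule uniform_inner_lower_bound)
          (use exists_inner_pos_if_zero_in_convex_hull[OF hem gp] S in blast)
    qed
  next
    fix S \<mu> \<mu>'
    assume "\<forall>d. \<exists>a\<in>S. \<mu> * norm d \<le> a \<bullet> d" "0 < (\<mu>'::real)" "\<mu>' \<le> \<mu>"
    then show "\<forall>d. \<exists>a\<in>S. \<mu>' * norm d \<le> a \<bullet> d"
      by (meson mult_right_mono norm_ge_zero order_trans)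
  qed
  then show ?thesis by auto
qed

lemma polyhedron_eq_Inter_facet_halfspaces:
  fixes P :: "'a::euclidean_space set"
  assumes "polyhedron P" and "interior P \<noteq> {}"
    and facet: "\<And>F. F facet_of P \<Longrightarrow>
                  a F \<noteq> 0 \<and> P \<subseteq> {x. a F \<bullet> x \<le> b F} \<and> F \<subseteq> {x. a F \<bullet> x = b F}"
  shows "P = {x. \<forall>F. F facet_of P \<longrightarrow> a F \<bullet> x \<le> b F}"
proof
  show "P \<subseteq> {x. \<forall>F. F facet_of P \<longrightarrow> a F \<bullet> x \<le> b F}" using facet by blast
next
  show "{x. \<forall>F. F facet_of P \<longrightarrow> a F \<bullet> x \<le> b F} \<subseteq> P"
  proof
    fix z assume z: "z \<in> {x. \<forall>F. F facet_of P \<longrightarrow> a F \<bullet> x \<le> b F}"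
    show "z \<in> P"
    proof (rule ccontr)
      assume "z \<notin> P"
      obtain p where p: "p \<in> interior P" using assms(2) by blast
      then have "closed_segment p z \<inter> frontier P \<noteq> {}"
        using \<open>z \<notin> P\<close> interior_subset
        by (intro connected_Int_frontier) (auto simp: connected_segment)
      then obtain y where y: "y \<in> closed_segment p z" "y \<in> frontier P" by blast
      have "y \<in> P - rel_interior P"
        using y(2) polyhedron_imp_closed[OF assms(1)]
        by (simp add: frontier_def rel_interior_nonempty_interior[OF assms(2)])
      then obtain F where F: "F facet_of P" "y \<in> F"
        using rel_boundary_of_polyhedron[OF assms(1)] by blast
      have "y \<in> P" using \<open>y \<in> P - rel_interior P\<close> by blast
      have "a F \<bullet> y = b F" using facet[OF F(1)] F(2) by blast
      have "p \<in> interior {x. a F \<bullet> x \<le> b F}"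
        using p interior_mono facet[OF F(1)] by blast
      then have "a F \<bullet> p < b F" using facet[OF F(1)] by simp
      obtain s where s: "0 \<le> s" "s \<le> 1" "y = (1 - s) *\<^sub>R p + s *\<^sub>R z"
        using y(1) unfolding closed_segment_def by blast
      have "s \<noteq> 1" using s \<open>y \<in> P\<close> \<open>z \<notin> P\<close> by auto
      have "a F \<bullet> y = (1 - s) * (a F \<bullet> p) + s * (a F \<bullet> z)"
        using s(3) by (simp add: inner_add_right)
      also have "\<dots> < (1 - s) * b F + s * b F"
        using \<open>a F \<bullet> p < b F\<close> z F(1) s \<open>s \<noteq> 1\<close>
        by (intro add_less_le_mono mult_strict_left_mono mult_left_mono) auto
      finally show False using \<open>a F \<bullet> y = b F\<close> by (simp add: algebra_simps)
    qed
  qed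
qed

lemma polytope_class_facet_halfspaces:
  fixes v :: "nat \<Rightarrow> 'a::euclidean_space"
  assumes "P \<in> polytope_class N v" and unit: "\<forall>i\<in>{1..N}. norm (v i) = 1"
  obtains a b where "\<And>F. F facet_of P \<Longrightarrow> a F \<in> v ` {1..N}"
    and "P = {x. \<forall>F. F facet_of P \<longrightarrow> a F \<bullet> x \<le> b F}"
proof -
  have P: "polytope P" "interior P \<noteq> {}"
    and "\<forall>F. \<exists>i b. F facet_of P \<longrightarrow>
            i \<in> {1..N} \<and> P \<subseteq> {x. v i \<bullet> x \<le> b} \<and> F = P \<inter> {x. v i \<bullet> x = b}"
    using assms(1) unfolding polytope_class_def by blast+
  then obtain i b where ib: "\<And>F. F facet_of P \<Longrightarrow>
      i F \<in> {1..N} \<and> P \<subseteq> {x. v (i F) \<bullet> x \<le> b F} \<and> F = P \<inter> {x. v (i F) \<bullet> x = b F}"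
    by metis
  have "v (i F) \<noteq> 0" if "F facet_of P" for F
    using ib[OF that] unit by fastforce
  then have "P = {x. \<forall>F. F facet_of P \<longrightarrow> v (i F) \<bullet> x \<le> b F}"
    using ib by (intro polyhedron_eq_Inter_facet_halfspaces polytope_imp_polyhedron P) blast+
  then show ?thesis using that[of "v \<circ> i" b] ib by auto
qed

lemma exists_max_slack:
  fixes a :: "'i \<Rightarrow> 'a::euclidean_space"
  assumes bounded: "bounded {x. \<forall>i\<in>I. a i \<bullet> x \<le> b i}"
    and nonempty: "{x. \<forall>i\<in>I. a i \<bullet> x \<le> b i} \<noteq> {}"
  shows "\<exists>x r. 0 \<le> r \<and> (\<forall>i\<in>I. a i \<bullet> x + r \<le> b i) \<and>
                (\<forall>y s. (\<forall>i\<in>I. a i \<bullet> y + s \<le> b i) \<longrightarrow> s \<le> r)"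
proof -
  let ?P = "{x. \<forall>i\<in>I. a i \<bullet> x \<le> b i}"
  have "I \<noteq> {}" using bounded not_bounded_UNIV by force
  then obtain i0 where "i0 \<in> I" by blast
  obtain B where B: "\<forall>x\<in>?P. norm x \<le> B" using bounded bounded_iff by blast
  define C where "C = {z. 0 \<le> snd z \<and> (\<forall>i\<in>I. a i \<bullet> fst z + snd z \<le> b i)}"
  have "closed C"
  proof -
    have "C = {z. 0 \<le> snd z} \<inter> (\<Inter>i\<in>I. {z. a i \<bullet> fst z + snd z \<le> b i})"
      unfolding C_def by auto
    then show ?thesis by (auto intro!: closed_Int closed_INT closed_Collect_le continuous_intros)
  qed
  have "C \<subseteq> cball 0 B \<times> {0..\<bar>b i0\<bar> + norm (a i0) * B}"
  proof
    fix z assume "z \<in> C"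
    then have "fst z \<in> ?P" "0 \<le> snd z" "a i0 \<bullet> fst z + snd z \<le> b i0"
      using \<open>i0 \<in> I\<close> unfolding C_def by force+
    moreover have "\<bar>a i0 \<bullet> fst z\<bar> \<le> norm (a i0) * B"
      using Cauchy_Schwarz_ineq2[of "a i0" "fst z"] B \<open>fst z \<in> ?P\<close>
      by (meson mult_left_mono norm_ge_zero order_trans)
    ultimately show "z \<in> cball 0 B \<times> {0..\<bar>b i0\<bar> + norm (a i0) * B}"
      using B by (cases z) auto
  qed
  then have "compact C"
    using \<open>closed C\<close> bounded_subset[OF bounded_Times[OF bounded_cball bounded_closed_interval]]
    by (simp add: compact_eq_bounded_closed)
  moreover have "C \<noteq> {}" using nonempty unfolding C_def by force
  ultimately obtain z where z: "z \<in> C" "\<forall>z'\<in>C. snd z' \<le> snd z"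
    using continuous_attains_sup[OF _ _ continuous_on_snd[OF continuous_on_id]] by blast
  have "s \<le> snd z" if "\<forall>i\<in>I. a i \<bullet> y + s \<le> b i" for y s
    using z that unfolding C_def by (cases "0 \<le> s") force+
  moreover have "0 \<le> snd z" "\<forall>i\<in>I. a i \<bullet> fst z + snd z \<le> b i"
    using z(1) unfolding C_def by auto
  ultimately show ?thesis by blast
qed

text \<open>Optimality of the maximal slack: otherwise a direction y with
  a i \<bullet> y < -1 on the active constraints (separation from the convex hull)
  increases the slack.\<close>
lemma zero_in_convex_hull_active_normals:
  fixes a :: "'i \<Rightarrow> 'a::euclidean_space"
  assumes "finite I" and feasible: "\<forall>i\<in>I. a i \<bullet> x + r \<le> b i"
    and maximal: "\<forall>y s. (\<forall>i\<in>I. a i \<bullet> y + s \<le> b i) \<longrightarrow> s \<le> r"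
  shows "0 \<in> convex hull (a ` {i\<in>I. a i \<bullet> x + r = b i})"
proof (rule ccontr)
  let ?A = "{i\<in>I. a i \<bullet> x + r = b i}"
  assume "0 \<notin> convex hull (a ` ?A)"
  moreover have "closed (convex hull (a ` ?A))"
    using \<open>finite I\<close> by (simp add: compact_imp_closed finite_imp_compact_convex_hull)
  ultimately obtain c \<beta> where c: "0 < \<beta>" "\<forall>z\<in>convex hull (a ` ?A). c \<bullet> z > \<beta>"
    using separating_hyperplane_closed_0[OF convex_convex_hull] by blast
  define y where "y = (- 1 / \<beta>) *\<^sub>R c"
  have active: "a i \<bullet> y < - 1" if "i \<in> ?A" for i
  proof -
    have "c \<bullet> a i > \<beta>" using c(2) that by (auto intro: hull_inc)
    then show ?thesis unfolding y_def using c(1) by (simp add: inner_commute field_simps)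
  qed
  have "\<forall>\<^sub>F t in at_right 0. a i \<bullet> (x + t *\<^sub>R y) + (r + t) \<le> b i" if "i \<in> I" for i
  proof (cases "i \<in> ?A")
    case True
    have "a i \<bullet> (x + t *\<^sub>R y) + (r + t) \<le> b i" if "0 < t" for t
    proof -
      have "a i \<bullet> (x + t *\<^sub>R y) + (r + t) = b i + t * (a i \<bullet> y + 1)"
        using True by (simp add: inner_add_right algebra_simps)
      moreover have "t * (a i \<bullet> y + 1) \<le> 0"
        using mult_nonneg_nonpos[of t "a i \<bullet> y + 1"] active[OF True] that by simp
      ultimately show ?thesis by simp
    qed
    then show ?thesis using eventually_at_right_less[of 0] by (rule eventually_mono[rotated])
  next
    case False
    then have "a i \<bullet> x + r < b i" using feasible \<open>i \<in> I\<close> by force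
    moreover have "((\<lambda>t. a i \<bullet> (x + t *\<^sub>R y) + (r + t)) \<longlongrightarrow> a i \<bullet> x + r) (at_right 0)"
      by (auto intro!: tendsto_eq_intros)
    ultimately show ?thesis by (auto elim: order_tendstoD(2)[THEN eventually_mono])
  qed
  then have "\<forall>\<^sub>F t in at_right 0. \<forall>i\<in>I. a i \<bullet> (x + t *\<^sub>R y) + (r + t) \<le> b i"
    by (intro eventually_ball_finite[OF \<open>finite I\<close>]) blast
  then have "\<forall>\<^sub>F t in at_right 0. 0 < t \<and> (\<forall>i\<in>I. a i \<bullet> (x + t *\<^sub>R y) + (r + t) \<le> b i)"
    using eventually_at_right_less[of 0] by (simp add: eventually_conj_iff)
  then obtain t :: real where "0 < t" "\<forall>i\<in>I. a i \<bullet> (x + t *\<^sub>R y) + (r + t) \<le> b i"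
    using eventually_happens' trivial_limit_at_right_real by blast
  then show False using maximal by fastforce
qed

lemma cball_subset_halfspaces:
  fixes a :: "'i \<Rightarrow> 'a::real_inner"
  assumes "\<forall>i\<in>I. norm (a i) = 1" and "\<forall>i\<in>I. a i \<bullet> x + r \<le> b i"
  shows "cball x r \<subseteq> {y. \<forall>i\<in>I. a i \<bullet> y \<le> b i}"
proof
  fix z assume "z \<in> cball x r"
  then have "a i \<bullet> (z - x) \<le> r" if "i \<in> I" for i
    using norm_cauchy_schwarz[of "a i" "z - x"] assms(1) that
    by (auto simp: dist_norm norm_minus_commute)
  then show "z \<in> {y. \<forall>i\<in>I. a i \<bullet> y \<le> b i}"
    using assms(2) by (force simp: inner_diff_right)
qed

lemma outer_radius_le:
  assumes "K \<noteq> {}" and "K \<subseteq> cball c r"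
  shows "outer_radius K \<le> r"
  unfolding outer_radius_def
proof (rule cInf_lower)
  show "r \<in> {r. \<exists>c. K \<subseteq> cball c r}" using assms(2) by blast
  show "bdd_below {r. \<exists>c. K \<subseteq> cball c r}"
    using assms(1) by (intro bdd_belowI[of _ 0]) force
qed

lemma polytope_class_inradius:
  fixes v :: "nat \<Rightarrow> 'a::euclidean_space"
  assumes unit: "\<forall>i\<in>{1..N}. norm (v i) = 1"
    and hem: "not_in_closed_hemisphere N v" and gp: "general_position N v"
  shows "\<exists>\<mu>>0. \<forall>P\<in>polytope_class N v. \<exists>c r. cball c r \<subseteq> P \<and> \<mu> * outer_radius P \<le> r"
proof -
  obtain \<mu> where "\<mu> > 0" and \<mu>: "\<forall>S. S \<subseteq> v ` {1..N} \<and> 0 \<in> convex hull S \<longrightarrow>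
                                  (\<forall>d. \<exists>a\<in>S. \<mu> * norm d \<le> a \<bullet> d)"
    using general_position_uniform_inner_bound[OF hem gp] by blast
  have "\<exists>c r. cball c r \<subseteq> P \<and> \<mu> * outer_radius P \<le> r" if PC: "P \<in> polytope_class N v" for P
  proof -
    obtain a b where a: "\<And>F. F facet_of P \<Longrightarrow> a F \<in> v ` {1..N}"
      and P: "P = {x. \<forall>F. F facet_of P \<longrightarrow> a F \<bullet> x \<le> b F}"
      using polytope_class_facet_halfspaces[OF PC unit] by blast
    let ?I = "{F. F facet_of P}"
    have "polytope P" "P \<noteq> {}"
      using PC interior_subset unfolding polytope_class_def by auto
    then have "finite ?I" "bounded {x. \<forall>F\<in>?I. a F \<bullet> x \<le> b F}"
      "{x. \<forall>F\<in>?I. a F \<bullet> x \<le> b F} \<noteq> {}"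
      using P by (simp_all add: finite_polyhedron_facets polytope_imp_polyhedron polytope_imp_bounded)
    then obtain x r where "0 \<le> r" and feasible: "\<forall>F\<in>?I. a F \<bullet> x + r \<le> b F"
      and maximal: "\<forall>y s. (\<forall>F\<in>?I. a F \<bullet> y + s \<le> b F) \<longrightarrow> s \<le> r"
      using exists_max_slack by blast
    let ?S = "a ` {F\<in>?I. a F \<bullet> x + r = b F}"
    have "0 \<in> convex hull ?S"
      using zero_in_convex_hull_active_normals[OF \<open>finite ?I\<close> feasible maximal] by blast
    moreover have "?S \<subseteq> v ` {1..N}" using a by blast
    ultimately have cover: "\<exists>F\<in>?I. a F \<bullet> x + r = b F \<and> \<mu> * norm (z - x) \<le> a F \<bullet> (z - x)" for z
      using \<mu> by blast
    have "norm (a F) = 1" if "F \<in> ?I" for F using a[of F] unit that by auto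
    then have "cball x r \<subseteq> {y. \<forall>F\<in>?I. a F \<bullet> y \<le> b F}"
      using feasible by (intro cball_subset_halfspaces) auto
    then have "cball x r \<subseteq> P" using P by simp
    moreover have "P \<subseteq> cball x (r / \<mu>)"
    proof
      fix z assume "z \<in> P"
      then have "\<mu> * norm (z - x) \<le> r"
        using cover[of z] P by (force simp: inner_diff_right)
      then show "z \<in> cball x (r / \<mu>)"
        using \<open>\<mu> > 0\<close> by (simp add: dist_norm norm_minus_commute field_simps)
    qed
    then have "outer_radius P \<le> r / \<mu>" by (rule outer_radius_le[OF \<open>P \<noteq> {}\<close>])
    then have "\<mu> * outer_radius P \<le> r" using \<open>\<mu> > 0\<close> by (simp add: field_simps)
    ultimately show ?thesis by blast
  qed
  then show ?thesis using \<open>\<mu> > 0\<close> by blast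
qed

lemma chord_length_ge:
  fixes P :: "'a::euclidean_space set"
  assumes "compact P" and "cball c r \<subseteq> P" and u: "norm u = 1" and "0 \<le> l"
    and close: "norm (x - c - ((x - c) \<bullet> u) *\<^sub>R u) + l / 2 \<le> r"
  shows "l \<le> chord_length P x u"
proof -
  define t0 where "t0 = (c - x) \<bullet> u"
  define L where "L = {t::real. x + t *\<^sub>R u \<in> P}"
  have "{t0 - l/2 .. t0 + l/2} \<subseteq> L"
  proof
    fix t assume t: "t \<in> {t0 - l/2 .. t0 + l/2}"
    have "x + t *\<^sub>R u - c = (x - c - ((x - c) \<bullet> u) *\<^sub>R u) + (t - t0) *\<^sub>R u"
      unfolding t0_def by (simp add: algebra_simps inner_diff_left)
    then have "norm (x + t *\<^sub>R u - c) \<le> norm (x - c - ((x - c) \<bullet> u) *\<^sub>R u) + \<bar>t - t0\<bar>"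
      using norm_triangle_ineq u by (metis mult_cancel_left1 norm_scaleR real_norm_def)
    also have "\<dots> \<le> r" using t close by (auto simp: abs_le_iff)
    finally have "x + t *\<^sub>R u \<in> cball c r" by (simp add: dist_norm norm_minus_commute)
    then show "t \<in> L" using assms(2) unfolding L_def by blast
  qed
  moreover have "compact L"
  proof -
    have "closed ((\<lambda>t. x + t *\<^sub>R u) -` P)"
      using compact_imp_closed[OF \<open>compact P\<close>]
      by (rule continuous_closed_vimage) (intro continuous_intros)
    then have "closed L" by (simp add: L_def vimage_def)
    moreover obtain B where B: "\<forall>y\<in>P. norm y \<le> B"
      using compact_imp_bounded[OF \<open>compact P\<close>] bounded_iff by blast
    have "norm t \<le> B + norm x" if "t \<in> L" for t
    proof -
      have "norm (t *\<^sub>R u) \<le> norm (x + t *\<^sub>R u) + norm x"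
        using norm_triangle_ineq4[of "x + t *\<^sub>R u" x] by simp
      then show ?thesis using B that u unfolding L_def by force
    qed
    then have "bounded L" unfolding bounded_iff by blast
    ultimately show ?thesis by (simp add: compact_eq_bounded_closed)
  qed
  ultimately have "measure lborel {t0 - l/2 .. t0 + l/2} \<le> measure lborel L"
    by (intro measure_mono_fmeasurable fmeasurable_compact) auto
  then show ?thesis using \<open>0 \<le> l\<close> unfolding chord_length_def L_def[symmetric] by simp
qed

lemma exists_unit_orthogonal:
  fixes u :: "'a::euclidean_space"
  assumes "DIM('a) \<ge> 2"
  shows "\<exists>e. norm e = 1 \<and> e \<bullet> u = 0"
proof -
  have "dim (span {u}) < DIM('a)"
    using dim_le_card'[of "{u}"] assms by (simp add: dim_span)
  then have "span {u} \<noteq> UNIV" by (metis dim_UNIV less_irrefl)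
  then obtain a :: 'a where "a \<noteq> 0" "\<forall>x\<in>span {u}. a \<bullet> x = 0"
    using span_not_UNIV_orthogonal by blast
  then show ?thesis
    by (intro exI[of _ "sgn a"]) (simp add: norm_sgn sgn_div_norm span_base)
qed

lemma emeasure_UN_balls_on_line:
  fixes e :: "'a::euclidean_space"
  assumes "norm e = 1"
  shows "emeasure lborel (\<Union>j<m. ball (c + real j *\<^sub>R e) (1/2))
           = real m * measure lborel (ball (0::'a) (1/2))"
proof -
  have disjoint: "disjoint_family_on (\<lambda>j. ball (c + real j *\<^sub>R e) (1/2)) {..<m}"
    unfolding disjoint_family_on_def
  proof (intro ballI impI)
    fix i j :: nat assume "i \<noteq> j"
    have "dist (c + real i *\<^sub>R e) (c + real j *\<^sub>R e) = \<bar>real i - real j\<bar>"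
      using assms by (simp add: dist_norm scaleR_diff_left[symmetric])
    also have "\<dots> \<ge> 1" using \<open>i \<noteq> j\<close> by linarith
    finally show "ball (c + real i *\<^sub>R e) (1/2) \<inter> ball (c + real j *\<^sub>R e) (1/2) = {}"
      using dist_triangle_half_r[of _ "c + real i *\<^sub>R e" 1 "c + real j *\<^sub>R e"]
      by (force simp: dist_commute)
  qed
  have ball_measure: "emeasure lborel (ball (a::'a) (1/2)) = measure lborel (ball (0::'a) (1/2))"
    for a
    using emeasure_lborel_ball_finite[of a "1/2"] content_ball_conv_unit_ball[of "1/2" a]
      content_ball_conv_unit_ball[of "1/2" "0::'a"]
    by (simp add: emeasure_eq_ennreal_measure)
  have "emeasure lborel (\<Union>j<m. ball (c + real j *\<^sub>R e) (1/2))
          = (\<Sum>j<m. emeasure lborel (ball (c + real j *\<^sub>R e) (1/2)))"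
    using disjoint by (intro sum_emeasure[symmetric]) auto
  then show ?thesis
    by (simp add: ball_measure ennreal_of_nat_eq_real_of_nat ennreal_mult)
qed

lemma slab_chord_integral_ge:
  fixes P :: "'a::euclidean_space set"
  assumes "DIM('a) \<ge> 2" and "compact P" and "cball c r \<subseteq> P"
    and "real m + 1 \<le> r" and "q \<ge> 0" and u: "norm u = 1"
  shows "ennreal (real m * measure lborel (ball (0::'a) (1/2))) \<le>
    (\<integral>\<^sup>+ x. indicator {x. 0 \<le> x \<bullet> u \<and> x \<bullet> u \<le> 1} x *
            ennreal (chord_length P x u powr q) \<partial>lborel)"
proof -
  have uu: "u \<bullet> u = 1" using u by (simp add: norm_eq_1)
  obtain e where e: "norm e = 1" "e \<bullet> u = 0"
    using exists_unit_orthogonal[OF assms(1)] by blast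
  define c0 where "c0 = c - (c \<bullet> u - 1/2) *\<^sub>R u"
  have "c0 \<bullet> u = 1/2" unfolding c0_def using uu by (simp add: inner_diff_left)
  define U where "U = (\<Union>j<m. ball (c0 + real j *\<^sub>R e) (1/2))"
  have "indicator U x \<le> indicator {x. 0 \<le> x \<bullet> u \<and> x \<bullet> u \<le> 1} x *
                         ennreal (chord_length P x u powr q)" for x
  proof (cases "x \<in> U")
    case True
    then obtain j where "j < m" and x: "x \<in> ball (c0 + real j *\<^sub>R e) (1/2)"
      unfolding U_def by blast
    define \<delta> where "\<delta> = x - (c0 + real j *\<^sub>R e)"
    have "norm \<delta> < 1/2" using x by (simp add: \<delta>_def dist_norm norm_minus_commute)
    moreover have "\<bar>\<delta> \<bullet> u\<bar> \<le> norm \<delta>" using Cauchy_Schwarz_ineq2[of \<delta> u] u by simp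
    moreover have "x \<bullet> u = 1/2 + \<delta> \<bullet> u"
      using \<open>c0 \<bullet> u = 1/2\<close> e by (simp add: \<delta>_def inner_diff_left inner_add_left)
    ultimately have slab: "0 \<le> x \<bullet> u \<and> x \<bullet> u \<le> 1" by linarith
    have "x - c = (\<delta> + real j *\<^sub>R e) - (c \<bullet> u - 1/2) *\<^sub>R u"
      unfolding \<delta>_def c0_def by (simp add: algebra_simps)
    moreover have "(z - k *\<^sub>R u) - ((z - k *\<^sub>R u) \<bullet> u) *\<^sub>R u = z - (z \<bullet> u) *\<^sub>R u"
      for z k using uu by (simp add: inner_diff_left algebra_simps)
    moreover have "(\<delta> + real j *\<^sub>R e) \<bullet> u = \<delta> \<bullet> u" using e by (simp add: inner_add_left)
    ultimately have "x - c - ((x - c) \<bullet> u) *\<^sub>R u = \<delta> + real j *\<^sub>R e - (\<delta> \<bullet> u) *\<^sub>R u"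
      by simp
    then have "norm (x - c - ((x - c) \<bullet> u) *\<^sub>R u) \<le> norm \<delta> + real j + \<bar>\<delta> \<bullet> u\<bar>"
      using norm_triangle_ineq4[of "\<delta> + real j *\<^sub>R e" "(\<delta> \<bullet> u) *\<^sub>R u"]
        norm_triangle_ineq[of \<delta> "real j *\<^sub>R e"] e u by simp
    then have "1 \<le> chord_length P x u"
      using \<open>norm \<delta> < 1/2\<close> \<open>\<bar>\<delta> \<bullet> u\<bar> \<le> norm \<delta>\<close> \<open>j < m\<close> assms(4)
      by (intro chord_length_ge[OF assms(2,3) u]) auto
    then have "1 \<le> chord_length P x u powr q" using \<open>q \<ge> 0\<close> by (rule ge_one_powr_ge_zero)
    then show ?thesis using slab True by simp
  qed simp
  then have "(\<integral>\<^sup>+ x. indicator U x \<partial>lborel) \<le> (\<integral>\<^sup>+ x. indicator {x. 0 \<le> x \<bullet> u \<and> x \<bullet> u \<le> 1} x *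
                                  ennreal (chord_length P x u powr q) \<partial>lborel)"
    by (rule nn_integral_mono)
  moreover have "(\<integral>\<^sup>+ x. indicator U x \<partial>lborel) = real m * measure lborel (ball (0::'a) (1/2))"
    using emeasure_UN_balls_on_line[OF e(1)] by (simp add: U_def)
  ultimately show ?thesis by simp
qed

lemma chord_integral_ge:
  fixes P :: "'a::euclidean_space set"
  assumes "DIM('a) \<ge> 2" and "compact P" and "cball c r \<subseteq> P"
    and "real m + 1 \<le> r" and "q \<ge> 0"
  shows "ennreal (real m * measure lborel (ball (0::'a) (1/2)) * measure lborel (ball (0::'a) 1))
           \<le> chord_integral q P"
proof -
  define \<beta> where "\<beta> = measure lborel (ball (0::'a) (1/2))"
  define \<gamma> where "\<gamma> = measure lborel (ball (0::'a) 1)"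
  have "emeasure lborel (ball (0::'a) 1 - {0}) = emeasure lborel (ball (0::'a) 1)"
    by (rule emeasure_Diff_null_set) (auto intro: finite_imp_null_set_lborel)
  also have "\<dots> = \<gamma>" unfolding \<gamma>_def
    using emeasure_lborel_ball_finite[of "0::'a" 1] by (simp add: emeasure_eq_ennreal_measure)
  finally have "ennreal (real m * \<beta> * \<gamma>) =
      ennreal (real m * \<beta>) * emeasure lborel (ball (0::'a) 1 - {0})"
    by (simp add: \<beta>_def \<gamma>_def ennreal_mult)
  also have "\<dots> = (\<integral>\<^sup>+ w. ennreal (real m * \<beta>) * indicator (ball 0 1 - {0}) (w::'a) \<partial>lborel)"
    by (simp add: nn_integral_cmult_indicator)
  also have "\<dots> \<le> chord_integral q P"
    unfolding chord_integral_def \<beta>_def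
    using slab_chord_integral_ge[OF assms, of "sgn w" for w]
    by (intro nn_integral_mono) (auto simp: indicator_def norm_sgn)
  finally show ?thesis unfolding \<beta>_def \<gamma>_def .
qed

theorem corollary3p5:
  fixes v :: "nat \<Rightarrow> 'a::euclidean_space"
    and N :: nat
    and P :: "nat \<Rightarrow> 'a set"
    and q :: real
  assumes "DIM('a) \<ge> 2"
    and "\<forall>i\<in>{1..N}. norm (v i) = 1"
    and "not_in_closed_hemisphere N v"
    and "general_position N v"
    and "\<forall>k. P k \<in> polytope_class N v"
    and "\<not> (\<exists>B. \<forall>k. outer_radius (P k) \<le> B)"
    and "q \<ge> 0"
  shows "\<not> (\<exists>B::real. \<forall>k. chord_integral q (P k) \<le> ennreal B)"
proof
  assume "\<exists>B::real. \<forall>k. chord_integral q (P k) \<le> ennreal B"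
  then obtain B :: real where B: "\<forall>k. chord_integral q (P k) \<le> ennreal B" by blast
  obtain \<mu> where "\<mu> > 0"
    and inradius: "\<forall>P\<in>polytope_class N v. \<exists>c r. cball c r \<subseteq> P \<and> \<mu> * outer_radius P \<le> r"
    using polytope_class_inradius[OF assms(2-4)] by blast
  define \<kappa> where "\<kappa> = measure lborel (ball (0::'a) (1/2)) * measure lborel (ball (0::'a) 1)"
  have "\<kappa> > 0" unfolding \<kappa>_def by (simp add: content_ball_pos)
  obtain m :: nat where "\<bar>B\<bar> / \<kappa> < real m" using reals_Archimedean2 by blast
  then have "\<bar>B\<bar> < real m * \<kappa>" using \<open>\<kappa> > 0\<close> by (simp add: field_simps)
  obtain k where "(real m + 1) / \<mu> < outer_radius (P k)"
    using assms(6) by (meson not_le)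
  moreover obtain c r where "cball c r \<subseteq> P k" "\<mu> * outer_radius (P k) \<le> r"
    using inradius assms(5) by blast
  ultimately have "real m + 1 \<le> r" using \<open>\<mu> > 0\<close> by (simp add: field_simps)
  have "compact (P k)"
    using assms(5) unfolding polytope_class_def by (auto intro: polytope_imp_compact)
  then have "ennreal (real m * \<kappa>) \<le> ennreal B"
    using chord_integral_ge[OF assms(1) _ \<open>cball c r \<subseteq> P k\<close> \<open>real m + 1 \<le> r\<close> assms(7)] B
    unfolding \<kappa>_def by (metis mult.assoc order_trans)
  then show False
    using \<open>\<bar>B\<bar> < real m * \<kappa>\<close> by (auto simp: ennreal_le_iff2)
qed

end
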